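(* Consider an $N$-player episodic Markov game in which all agents run the BM-OFTRL algorithm with smooth value updates described in the context. For every $(h,t)\in[H]\times[T]$, \[ \delta_h^t \leq \sum_{j=1}^t \alpha_t^j\, \delta_{h+1}^j + \operatorname{SwapReg}_h^t. \]
   Context: Markov game: $N$ agents $\mathcal{N}=\{1,\dots,N\}$, horizon $H$, finite state space $\mathcal{S}$, finite action sets $\mathcal{A}_i$ ($A_i=|\mathcal A_i|$), joint action space $\mathcal{A}_{\mathrm{all}}=\prod_i\mathcal{A}_i$, rewards $r_{h,i}:\mathcal{S}\times\mathcal{A}_{\mathrm{all}}\to[0,1]$, transitions $P_h(\cdot\mid s,\bm a)$. For a (possibly correlated, non-Markov) policy $\pi$ acting from step $h$, $V^\pi_{h,i}(s)$ is the expected sum of agent $i$'s rewards from step $h$ to $H$ given $s_h=s$; all values at step $H+1$ are $0$. Notation: $[Q\pi_{h,-i}](s,a_i)=\sum_{\bm a_{-i}}Q(s,a_i,\bm a_{-i})\prod_{k\ne i}\pi_{h,k}(s,a_k)$, $[Q\pi_h](s)=\sum_{\bm a}Q(s,\bm a)\prod_k\pi_{h,k}(s,a_k)$, $P_h[V](s,\bm a)=\mathbb E_{s'\sim P_h(\cdot\mid s,\bm a)}V(s')$. Weights: $\alpha_t=\frac{H+1}{H+t}$, $\alpha_t^j=\alpha_j\prod_{j'=j+1}^t(1-\alpha_{j'})$ ($1\le j\le t$); at iteration $t$, $w_j=\alpha_t^j/\alpha_t^1$. Algorithm (agent $i$; all agents run it), learning rate $\eta>0$, log-barrier $\mathcal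 R(\bm x)=-\sum_a\log\bm x[a]$. Initialize $Q^0_{h,i}\equiv0$, $\pi^0_{h,i}(s,\cdot)$ uniform, $Q^t_{H+1,i}\equiv0$. For $t=1,\dots,T$: for all $s,h$, $a_i$: $\ell^{t,a_i}_{h,i}(s,a_i')=\sum_{j=1}^{t-1}w_j\pi^j_{h,i}(s,a_i)[Q^j_{h,i}\pi^j_{h,-i}](s,a_i')+w_t\pi^{t-1}_{h,i}(s,a_i)[Q^{t-1}_{h,i}\pi^{t-1}_{h,-i}](s,a_i')$, $q^{t,a_i}_{h,i}(s,\cdot)=\arg\max_{\bm x\in\Delta(\mathcal A_i)}\{\langle\bm x,\eta\ell^{t,a_i}_{h,i}(s,\cdot)/w_t\rangle-\mathcal R(\bm x)\}$, and $\pi^t_{h,i}(s,\cdot)$ is a distribution with $\pi^t_{h,i}(s,\cdot)=\sum_{a_i}\pi^t_{h,i}(s,a_i)q^{t,a_i}_{h,i}(s,\cdot)$. Then for $h=H,\dots,1$: $Q^t_{h,i}(s,\bm a)=(1-\alpha_t)Q^{t-1}_{h,i}(s,\bm a)+\alpha_t\big(r_{h,i}(s,\bm a)+P_h[\,[Q^t_{h+1,i}\pi^t_{h+1}]\,](s,\bm a)\big)$. Correlated policy $\bar\pi^t_h$ (acting from step $h$): for $h'=h,\dots,H$, sample $\tau\in[t]$ with $\mathbb P(\tau=j)=\alpha^j_t$ (shared randomness), all agents play the product policy $\pi^\tau_{h'}$ at step $h'$, set $t\leftarrow\tau$. Strategy modification for agent $i$ effective from step $h$: $\phi_i=\{\phi^s_{h',i}:\mathcal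 A_i\to\mathcal A_i\}_{h'\ge h,s}$; $\phi_i\diamond\pi$ replaces agent $i$'s recommended action $a_i$ at step $h'$, state $s$ by $\phi^s_{h',i}(a_i)$. Definitions: $\delta_h^t=\max_{i\in\mathcal N}\max_{\phi_i}\max_{s\in\mathcal S}\big(V^{\phi_i\diamond\bar\pi^t_h}_{h,i}(s)-V^{\bar\pi^t_h}_{h,i}(s)\big)$, with $\delta^t_{H+1}=0$; $\operatorname{SwapReg}^t_{h,i}(s)=\max_{\phi^s_{h,i}:\mathcal A_i\to\mathcal A_i}\sum_{j=1}^t\alpha^j_t\langle\phi^s_{h,i}\diamond\pi^j_{h,i}(s,\cdot)-\pi^j_{h,i}(s,\cdot),[Q^j_{h,i}\pi^j_{h,-i}](s,\cdot)\rangle$, where $\phi\diamond\bm x$ is the distribution of $\phi(a)$ for $a\sim\bm x$; $\operatorname{SwapReg}^t_h=\max_i\max_s\operatorname{SwapReg}^t_{h,i}(s)$. *)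

theory Defs
  imports "HOL-Probability.Probability_Mass_Function"
begin

definition alpha :: "nat \<Rightarrow> nat \<Rightarrow> real" where
  "alpha H t = (real H + 1) / (real H + real t)"

definition alphaw :: "nat \<Rightarrow> nat \<Rightarrow> nat \<Rightarrow> real" where
  "alphaw H t j = alpha H j * (\<Prod>j'\<in>{j+1..t}. (1 - alpha H j'))"

definition wgt :: "nat \<Rightarrow> nat \<Rightarrow> nat \<Rightarrow> real" where
  "wgt H t j = alphaw H t j / alphaw H t 1"

definition joint :: "('i \<Rightarrow> 'a set) \<Rightarrow> ('i \<Rightarrow> 'a) set" where
  "joint A = {a. \<forall>k. a k \<in> A k}"

definition margQ ::
  "('i \<Rightarrow> 'a set) \<Rightarrow> (nat \<Rightarrow> nat \<Rightarrow> 'i \<Rightarrow> 's \<Rightarrow> 'a \<Rightarrow> real) \<Rightarrow>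
   (nat \<Rightarrow> nat \<Rightarrow> 'i \<Rightarrow> 's \<Rightarrow> ('i \<Rightarrow> 'a) \<Rightarrow> real) \<Rightarrow> nat \<Rightarrow> nat \<Rightarrow> 'i \<Rightarrow> 's \<Rightarrow> 'a \<Rightarrow> real" where
  "margQ A pol Q j h i s b =
     (\<Sum>a\<in>{a\<in>joint A. a i = b}. Q j h i s a * (\<Prod>k\<in>-{i}. pol j h k s (a k)))"

definition fullQ ::
  "('i::finite \<Rightarrow> 'a set) \<Rightarrow> (nat \<Rightarrow> nat \<Rightarrow> 'i \<Rightarrow> 's \<Rightarrow> 'a \<Rightarrow> real) \<Rightarrow>
   (nat \<Rightarrow> nat \<Rightarrow> 'i \<Rightarrow> 's \<Rightarrow> ('i \<Rightarrow> 'a) \<Rightarrow> real) \<Rightarrow> nat \<Rightarrow> nat \<Rightarrow> 'i \<Rightarrow> 's \<Rightarrow> real" where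
  "fullQ A pol Q j h i s =
     (\<Sum>a\<in>joint A. Q j h i s a * (\<Prod>k\<in>UNIV. pol j h k s (a k)))"

definition isdist :: "'a set \<Rightarrow> ('a \<Rightarrow> real) \<Rightarrow> bool" where
  "isdist B x \<longleftrightarrow> (\<forall>b\<in>B. x b \<ge> 0) \<and> (\<forall>b. b \<notin> B \<longrightarrow> x b = 0) \<and> sum x B = 1"

(* distribution on B with full support (the domain of the log-barrier) *)
definition posdist :: "'a set \<Rightarrow> ('a \<Rightarrow> real) \<Rightarrow> bool" where
  "posdist B x \<longleftrightarrow> (\<forall>b\<in>B. x b > 0) \<and> (\<forall>b. b \<notin> B \<longrightarrow> x b = 0) \<and> sum x B = 1"

definition loss ::
  "('i \<Rightarrow> 'a set) \<Rightarrow> nat \<Rightarrow> (nat \<Rightarrow> nat \<Rightarrow> 'i \<Rightarrow> 's \<Rightarrow> 'a \<Rightarrow> real) \<Rightarrow>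
   (nat \<Rightarrow> nat \<Rightarrow> 'i \<Rightarrow> 's \<Rightarrow> ('i \<Rightarrow> 'a) \<Rightarrow> real) \<Rightarrow> nat \<Rightarrow> nat \<Rightarrow> 'i \<Rightarrow> 's \<Rightarrow> 'a \<Rightarrow> 'a \<Rightarrow> real" where
  "loss A H pol Q t h i s b b' =
     (\<Sum>j\<in>{1..t-1}. wgt H t j * pol j h i s b * margQ A pol Q j h i s b')
     + wgt H t t * pol (t-1) h i s b * margQ A pol Q (t-1) h i s b'"

definition ftrl_obj ::
  "'a set \<Rightarrow> real \<Rightarrow> real \<Rightarrow> ('a \<Rightarrow> real) \<Rightarrow> ('a \<Rightarrow> real) \<Rightarrow> real" where
  "ftrl_obj B eta wt l x = (\<Sum>b\<in>B. x b * (eta * l b / wt)) + (\<Sum>b\<in>B. ln (x b))"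

(* dev h s a : the joint action actually played at step h, state s, when a is recommended.
   vaux n h t s : value for agent i from step h with n remaining steps, latent counter t. *)
primrec vaux ::
  "('i::finite \<Rightarrow> 'a set) \<Rightarrow> (nat \<Rightarrow> 'i \<Rightarrow> 's::finite \<Rightarrow> ('i \<Rightarrow> 'a) \<Rightarrow> real) \<Rightarrow>
   (nat \<Rightarrow> 's \<Rightarrow> ('i \<Rightarrow> 'a) \<Rightarrow> 's pmf) \<Rightarrow> nat \<Rightarrow> (nat \<Rightarrow> nat \<Rightarrow> 'i \<Rightarrow> 's \<Rightarrow> 'a \<Rightarrow> real) \<Rightarrow>
   (nat \<Rightarrow> 's \<Rightarrow> ('i \<Rightarrow> 'a) \<Rightarrow> ('i \<Rightarrow> 'a)) \<Rightarrow> 'i \<Rightarrow> nat \<Rightarrow> nat \<Rightarrow> nat \<Rightarrow> 's \<Rightarrow> real" where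
  "vaux A r P H pol dev i 0 h t s = 0"
| "vaux A r P H pol dev i (Suc n) h t s =
     (\<Sum>\<tau>\<in>{1..t}. alphaw H t \<tau> *
        (\<Sum>a\<in>joint A. (\<Prod>k\<in>UNIV. pol \<tau> h k s (a k)) *
           (r h i s (dev h s a) +
            (\<Sum>s'\<in>UNIV. pmf (P h s (dev h s a)) s' * vaux A r P H pol dev i n (Suc h) \<tau> s'))))"

definition Vbar where
  "Vbar A r P H pol dev i h t s = vaux A r P H pol dev i (Suc H - h) h t s"

definition modif :: "'i \<Rightarrow> (nat \<Rightarrow> 's \<Rightarrow> 'a \<Rightarrow> 'a) \<Rightarrow> nat \<Rightarrow> 's \<Rightarrow> ('i \<Rightarrow> 'a) \<Rightarrow> ('i \<Rightarrow> 'a)" where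
  "modif i phi h s a = a(i := phi h s (a i))"

definition delta where
  "delta A r P H pol h t =
     Sup {Vbar A r P H pol (modif i phi) i h t s - Vbar A r P H pol (\<lambda>h s a. a) i h t s
          | i phi s. \<forall>h' s' b. b \<in> A i \<longrightarrow> phi h' s' b \<in> A i}"

definition swapreg_i where
  "swapreg_i A H pol Q h t i s =
     Sup {(\<Sum>j\<in>{1..t}. alphaw H t j *
            (\<Sum>b\<in>A i. pol j h i s b * (margQ A pol Q j h i s (phi b) - margQ A pol Q j h i s b)))
          | phi. \<forall>b\<in>A i. phi b \<in> A i}"

definition swapreg where
  "swapreg A H pol Q h t = Sup {swapreg_i A H pol Q h t i s | i s. True}"

end

(*
  Unrolling the smooth update gives Q^t_h(s,a) = r_h(s,a) + P_h[sum_j alpha_t^j [Q^j_{h+1} pi^j_{h+1}]],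
  and a downward induction on h shows that the value of the correlated policy bar-pi^t_h is
  sum_j alpha_t^j [Q^j_h pi^j_h]. Hence Q^tau_h = r_h + P_h[V^{bar-pi^tau}_{h+1}]: the Q-functions are
  exactly the one-step look-ahead values of the correlated policy. A strategy modification gains at
  most delta^tau_{h+1} from step h+1 on in the branch where tau was sampled, while its gain at step h,
  averaged over tau with the weights alpha_t^tau, is the swap-regret objective of agent i for the
  swap phi^s_{h,i} against the losses [Q^tau pi^tau_{-i}], hence at most SwapReg^t_h.
*)

theory Submission
  imports Defs
begin

lemma alpha_nonneg: "0 \<le> alpha H j"
  unfolding alpha_def by simp

lemma alpha_le_1: "1 \<le> j \<Longrightarrow> alpha H j \<le> 1"
  unfolding alpha_def by (simp add: divide_le_eq_1)

lemma alphaw_nonneg: "1 \<le> j \<Longrightarrow> 0 \<le> alphaw H t j"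
  unfolding alphaw_def
  by (intro mult_nonneg_nonneg alpha_nonneg prod_nonneg) (auto intro: alpha_le_1)

lemma alphaw_self [simp]: "alphaw H t t = alpha H t"
  unfolding alphaw_def by simp

lemma alphaw_Suc: "j \<le> t \<Longrightarrow> alphaw H (Suc t) j = (1 - alpha H (Suc t)) * alphaw H t j"
  unfolding alphaw_def by (simp add: prod.cl_ivl_Suc)

lemma smooth_update_eq_weighted_sum:
  assumes upd: "\<And>t. 1 \<le> t \<Longrightarrow> t \<le> T \<Longrightarrow> x t = (1 - alpha H t) * x (t - 1) + alpha H t * y t"
    and "1 \<le> t" "t \<le> T"
  shows "x t = (\<Sum>j\<in>{1..t}. alphaw H t j * y j)"
  using assms(2,3)
proof (induction t rule: dec_induct)
  case base
  then show ?case using upd[of 1] by (simp add: alpha_def)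
next
  case (step t)
  have "x (Suc t) = (1 - alpha H (Suc t)) * (\<Sum>j\<in>{1..t}. alphaw H t j * y j) + alpha H (Suc t) * y (Suc t)"
    using upd[of "Suc t"] step by simp
  also have "\<dots> = (\<Sum>j\<in>{1..Suc t}. alphaw H (Suc t) j * y j)"
    by (simp add: sum.cl_ivl_Suc alphaw_Suc sum_distrib_left mult.assoc)
  finally show ?case .
qed

lemma sum_alphaw: "1 \<le> t \<Longrightarrow> (\<Sum>j\<in>{1..t}. alphaw H t j) = 1"
  using smooth_update_eq_weighted_sum[of t "\<lambda>_. 1" H "\<lambda>_. 1" t] by simp

lemma joint_eq_PiE: "joint (A :: 'i::finite \<Rightarrow> 'a set) = PiE UNIV A"
  unfolding joint_def PiE_def Pi_def extensional_def by auto

lemma finite_joint: "(\<And>i. finite (A i)) \<Longrightarrow> finite (joint (A :: 'i::finite \<Rightarrow> 'a set))"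
  unfolding joint_eq_PiE by (intro finite_PiE) auto

lemma isdist_joint_prod:
  fixes A :: "'i::finite \<Rightarrow> 'a set"
  assumes fin: "\<And>k. finite (A k)" and dist: "\<And>k. isdist (A k) (p k)"
  shows "isdist (joint A) (\<lambda>a. \<Prod>k\<in>UNIV. p k (a k))"
proof -
  have "(\<Sum>a\<in>joint A. \<Prod>k\<in>UNIV. p k (a k)) = (\<Prod>k\<in>UNIV. \<Sum>b\<in>A k. p k b)"
    unfolding joint_eq_PiE using prod_sum_PiE[of UNIV A p] fin by simp
  then show ?thesis
    using dist unfolding isdist_def joint_def by (auto intro: prod_nonneg)
qed

lemma isdist_pmf: "isdist (UNIV :: 's::finite set) (pmf p)"
  unfolding isdist_def by (simp add: sum_pmf_eq_1)

lemma weighted_sum_le_add: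
  fixes w f g :: "'a \<Rightarrow> real"
  assumes "isdist S w" "\<And>x. x \<in> S \<Longrightarrow> f x \<le> g x + c"
  shows "(\<Sum>x\<in>S. w x * f x) \<le> (\<Sum>x\<in>S. w x * g x) + c"
proof -
  have "(\<Sum>x\<in>S. w x * f x) \<le> (\<Sum>x\<in>S. w x * (g x + c))"
    using assms unfolding isdist_def by (intro sum_mono mult_left_mono) auto
  also have "\<dots> = (\<Sum>x\<in>S. w x * g x) + c"
    using assms(1) unfolding isdist_def by (simp add: distrib_left sum.distrib flip: sum_distrib_right)
  finally show ?thesis .
qed

lemma weighted_sum_bounds:
  fixes w f :: "'a \<Rightarrow> real"
  assumes "\<And>x. x \<in> S \<Longrightarrow> 0 \<le> w x" "sum w S = 1"
    and "\<And>x. x \<in> S \<Longrightarrow> lo \<le> f x \<and> f x \<le> hi"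
  shows "lo \<le> (\<Sum>x\<in>S. w x * f x) \<and> (\<Sum>x\<in>S. w x * f x) \<le> hi"
proof -
  have "(\<Sum>x\<in>S. w x * lo) \<le> (\<Sum>x\<in>S. w x * f x)"
    by (rule sum_mono, rule mult_left_mono) (use assms(1,3) in auto)
  moreover have "(\<Sum>x\<in>S. w x * f x) \<le> (\<Sum>x\<in>S. w x * hi)"
    by (rule sum_mono, rule mult_left_mono) (use assms(1,3) in auto)
  ultimately show ?thesis
    using assms(2) by (simp flip: sum_distrib_right)
qed

lemma sum_joint_unilateral_deviation:
  fixes A :: "'i::finite \<Rightarrow> 'a set" and p :: "'i \<Rightarrow> 'a \<Rightarrow> real"
  assumes fin: "\<And>k. finite (A k)" and f: "\<And>b. b \<in> A i \<Longrightarrow> f b \<in> A i"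
  shows "(\<Sum>a\<in>joint A. (\<Prod>k\<in>UNIV. p k (a k)) * g (a(i := f (a i))))
     = (\<Sum>b\<in>A i. p i b * (\<Sum>a\<in>{a\<in>joint A. a i = f b}. g a * (\<Prod>k\<in>-{i}. p k (a k))))"
proof -
  have slice: "(\<Sum>a\<in>{a\<in>joint A. a i = b}. (\<Prod>k\<in>UNIV. p k (a k)) * g (a(i := f (a i))))
      = p i b * (\<Sum>a\<in>{a\<in>joint A. a i = f b}. g a * (\<Prod>k\<in>-{i}. p k (a k)))"
    if b: "b \<in> A i" for b
  proof -
    have "(\<Prod>k\<in>UNIV. p k (a k)) = p i (a i) * (\<Prod>k\<in>-{i}. p k (a k))" for a
      using prod.remove[of UNIV i "\<lambda>k. p k (a k)"] by (simp add: Compl_eq_Diff_UNIV)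
    then have "(\<Sum>a\<in>{a\<in>joint A. a i = b}. (\<Prod>k\<in>UNIV. p k (a k)) * g (a(i := f (a i))))
        = p i b * (\<Sum>a\<in>{a\<in>joint A. a i = b}. g (a(i := f b)) * (\<Prod>k\<in>-{i}. p k (a k)))"
      by (simp add: sum_distrib_left mult_ac)
    also have "(\<Sum>a\<in>{a\<in>joint A. a i = b}. g (a(i := f b)) * (\<Prod>k\<in>-{i}. p k (a k)))
        = (\<Sum>a\<in>{a\<in>joint A. a i = f b}. g a * (\<Prod>k\<in>-{i}. p k (a k)))"
      by (rule sum.reindex_bij_witness[where i = "\<lambda>a. a(i := b)" and j = "\<lambda>a. a(i := f b)"])
        (use b f[OF b] in \<open>auto simp: joint_def intro!: prod.cong\<close>)
    finally show ?thesis .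
  qed
  have "(\<Sum>a\<in>joint A. (\<Prod>k\<in>UNIV. p k (a k)) * g (a(i := f (a i))))
     = (\<Sum>b\<in>A i. \<Sum>a\<in>{a\<in>joint A. a i = b}. (\<Prod>k\<in>UNIV. p k (a k)) * g (a(i := f (a i))))"
    by (rule sum.group[symmetric]) (use finite_joint[of A, OF fin] fin in \<open>auto simp: joint_def\<close>)
  then show ?thesis
    using slice by simp
qed

lemma sum_joint_deviation_eq_sum_margQ:
  fixes A :: "'i::finite \<Rightarrow> 'a set"
  assumes "\<And>k. finite (A k)" "\<forall>b\<in>A i. phi b \<in> A i"
  shows "(\<Sum>a\<in>joint A. (\<Prod>k\<in>UNIV. pol j h k s (a k)) * Q j h i s (a(i := phi (a i))))
     = (\<Sum>b\<in>A i. pol j h i s b * margQ A pol Q j h i s (phi b))"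
  unfolding margQ_def using assms by (intro sum_joint_unilateral_deviation) auto

lemma fullQ_eq_sum_margQ:
  fixes A :: "'i::finite \<Rightarrow> 'a set"
  assumes "\<And>k. finite (A k)"
  shows "fullQ A pol Q j h i s = (\<Sum>b\<in>A i. pol j h i s b * margQ A pol Q j h i s b)"
proof -
  have "(\<Sum>a\<in>joint A. (\<Prod>k\<in>UNIV. pol j h k s (a k)) * Q j h i s (a(i := a i)))
     = (\<Sum>b\<in>A i. pol j h i s b * margQ A pol Q j h i s b)"
    by (rule sum_joint_deviation_eq_sum_margQ) (use assms in auto)
  then show ?thesis
    unfolding fullQ_def by (simp add: mult.commute)
qed

lemma swap_gain_le_swapreg:
  fixes A :: "'i::finite \<Rightarrow> 'a set" and pol :: "nat \<Rightarrow> nat \<Rightarrow> 'i \<Rightarrow> 's::finite \<Rightarrow> 'a \<Rightarrow> real"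
  assumes fin: "finite (A i)" and phi: "\<forall>b\<in>A i. phi b \<in> A i"
  shows "(\<Sum>j\<in>{1..t}. alphaw H t j *
            (\<Sum>b\<in>A i. pol j h i s b * (margQ A pol Q j h i s (phi b) - margQ A pol Q j h i s b)))
         \<le> swapreg A H pol Q h t"
proof -
  define gain where "gain \<psi> = (\<Sum>j\<in>{1..t}. alphaw H t j *
            (\<Sum>b\<in>A i. pol j h i s b * (margQ A pol Q j h i s (\<psi> b) - margQ A pol Q j h i s b)))"
    for \<psi>
  have "{gain \<psi> |\<psi>. \<forall>b\<in>A i. \<psi> b \<in> A i} \<subseteq> gain ` (A i \<rightarrow>\<^sub>E A i)"
  proof clarify
    fix \<psi> assume "\<forall>b\<in>A i. \<psi> b \<in> A i"
    moreover have "gain \<psi> = gain (restrict \<psi> (A i))"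
      unfolding gain_def by (intro sum.cong refl arg_cong2[where f = "(*)"]) auto
    ultimately show "gain \<psi> \<in> gain ` (A i \<rightarrow>\<^sub>E A i)" by auto
  qed
  moreover have "finite (gain ` (A i \<rightarrow>\<^sub>E A i))"
    using fin by (intro finite_imageI finite_PiE)
  ultimately have "bdd_above {gain \<psi> |\<psi>. \<forall>b\<in>A i. \<psi> b \<in> A i}"
    by (intro bdd_above_finite) (rule finite_subset)
  then have "gain phi \<le> swapreg_i A H pol Q h t i s"
    unfolding swapreg_i_def gain_def[symmetric] by (rule cSup_upper[rotated]) (use phi in blast)
  also have "\<dots> \<le> swapreg A H pol Q h t"
    unfolding swapreg_def
  proof (rule cSup_upper)
    have "{swapreg_i A H pol Q h t i s |i s. True} = (\<lambda>(i, s). swapreg_i A H pol Q h t i s) ` UNIV"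
      by auto
    then show "bdd_above {swapreg_i A H pol Q h t i s |i s. True}"
      by (simp add: bdd_above_finite)
  qed blast
  finally show ?thesis
    unfolding gain_def .
qed

lemma Vbar_unfold:
  assumes "h \<le> H"
  shows "Vbar A r P H pol dev i h t s =
     (\<Sum>\<tau>\<in>{1..t}. alphaw H t \<tau> *
        (\<Sum>a\<in>joint A. (\<Prod>k\<in>UNIV. pol \<tau> h k s (a k)) *
           (r h i s (dev h s a) +
            (\<Sum>s'\<in>UNIV. pmf (P h s (dev h s a)) s' * Vbar A r P H pol dev i (Suc h) \<tau> s'))))"
proof -
  have "Suc H - h = Suc (H - h)" "Suc H - Suc h = H - h"
    using assms by auto
  then show ?thesis
    unfolding Vbar_def by simp
qed

lemma Vbar_Suc_H [simp]: "Vbar A r P H pol dev i (Suc H) t s = 0"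
  unfolding Vbar_def by simp

lemma modif_in_joint:
  assumes "a \<in> joint A" "\<forall>h s b. b \<in> A i \<longrightarrow> phi h s b \<in> A i"
  shows "modif i phi h s a \<in> joint A"
  using assms unfolding modif_def joint_def by auto

locale smooth_Q_updates =
  fixes A :: "'i::finite \<Rightarrow> 'a set"
    and r :: "nat \<Rightarrow> 'i \<Rightarrow> 's::finite \<Rightarrow> ('i \<Rightarrow> 'a) \<Rightarrow> real"
    and P :: "nat \<Rightarrow> 's \<Rightarrow> ('i \<Rightarrow> 'a) \<Rightarrow> 's pmf"
    and H T :: nat
    and pol :: "nat \<Rightarrow> nat \<Rightarrow> 'i \<Rightarrow> 's \<Rightarrow> 'a \<Rightarrow> real"
    and Q :: "nat \<Rightarrow> nat \<Rightarrow> 'i \<Rightarrow> 's \<Rightarrow> ('i \<Rightarrow> 'a) \<Rightarrow> real"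
  assumes A_fin: "\<And>i. finite (A i)"
    and r_range: "\<And>h i s a. a \<in> joint A \<Longrightarrow> 0 \<le> r h i s a \<and> r h i s a \<le> 1"
    and pol_dist: "\<And>t h i s. \<lbrakk>1 \<le> t; t \<le> T; 1 \<le> h; h \<le> H\<rbrakk> \<Longrightarrow> isdist (A i) (pol t h i s)"
    and Q_Suc_H: "\<And>t i s a. a \<in> joint A \<Longrightarrow> Q t (Suc H) i s a = 0"
    and Q_upd: "\<And>t h i s a. \<lbrakk>1 \<le> t; t \<le> T; 1 \<le> h; h \<le> H; a \<in> joint A\<rbrakk> \<Longrightarrow>
        Q t h i s a = (1 - alpha H t) * Q (t - 1) h i s a
          + alpha H t * (r h i s a + (\<Sum>s'\<in>UNIV. pmf (P h s a) s' * fullQ A pol Q t (Suc h) i s'))"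
begin

abbreviation Vmod where "Vmod dev \<equiv> Vbar A r P H pol dev"

abbreviation V where "V \<equiv> Vmod (\<lambda>h s a. a)"

abbreviation gains where
  "gains h \<tau> \<equiv> {Vmod (modif i phi) i h \<tau> s - V i h \<tau> s |i phi s.
      \<forall>h' s' b. b \<in> A i \<longrightarrow> phi h' s' b \<in> A i}"

lemma delta_eq_Sup_gains: "delta A r P H pol h \<tau> = Sup (gains h \<tau>)"
  unfolding delta_def ..

lemma isdist_joint_pol:
  "\<lbrakk>1 \<le> t; t \<le> T; 1 \<le> h; h \<le> H\<rbrakk> \<Longrightarrow> isdist (joint A) (\<lambda>a. \<Prod>k\<in>UNIV. pol t h k s (a k))"
  by (intro isdist_joint_prod A_fin pol_dist)

lemma Q_eq_reward_plus_weighted_fullQ: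
  assumes "1 \<le> t" "t \<le> T" "1 \<le> h" "h \<le> H" "a \<in> joint A"
  shows "Q t h i s a = r h i s a +
    (\<Sum>s'\<in>UNIV. pmf (P h s a) s' * (\<Sum>m\<in>{1..t}. alphaw H t m * fullQ A pol Q m (Suc h) i s'))"
proof -
  let ?F = "\<lambda>m s'. fullQ A pol Q m (Suc h) i s'"
  have "Q t h i s a = (\<Sum>m\<in>{1..t}. alphaw H t m * (r h i s a + (\<Sum>s'\<in>UNIV. pmf (P h s a) s' * ?F m s')))"
    by (rule smooth_update_eq_weighted_sum[where x = "\<lambda>t. Q t h i s a"]) (use Q_upd assms in auto)
  also have "\<dots> = (\<Sum>m\<in>{1..t}. alphaw H t m) * r h i s a
      + (\<Sum>m\<in>{1..t}. \<Sum>s'\<in>UNIV. pmf (P h s a) s' * (alphaw H t m * ?F m s'))"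
    by (simp add: distrib_left sum.distrib sum_distrib_left sum_distrib_right mult_ac)
  also have "(\<Sum>m\<in>{1..t}. \<Sum>s'\<in>UNIV. pmf (P h s a) s' * (alphaw H t m * ?F m s'))
      = (\<Sum>s'\<in>UNIV. pmf (P h s a) s' * (\<Sum>m\<in>{1..t}. alphaw H t m * ?F m s'))"
    by (subst sum.swap) (simp add: sum_distrib_left)
  finally show ?thesis
    using sum_alphaw[OF assms(1)] by simp
qed

lemma V_eq_weighted_fullQ:
  assumes "1 \<le> h" "h \<le> Suc H" "1 \<le> \<tau>" "\<tau> \<le> T"
  shows "V i h \<tau> s = (\<Sum>m\<in>{1..\<tau>}. alphaw H \<tau> m * fullQ A pol Q m h i s)"
  using assms(2-4)
proof (induction h arbitrary: \<tau> s rule: inc_induct)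
  case base
  then show ?case
    by (simp add: fullQ_def Q_Suc_H)
next
  case (step n)
  have "V i n \<tau> s = (\<Sum>\<tau>'\<in>{1..\<tau>}. alphaw H \<tau> \<tau>' *
      (\<Sum>a\<in>joint A. (\<Prod>k\<in>UNIV. pol \<tau>' n k s (a k)) *
         (r n i s a + (\<Sum>s'\<in>UNIV. pmf (P n s a) s' * V i (Suc n) \<tau>' s'))))"
    using step.hyps by (simp add: Vbar_unfold)
  also have "\<dots> = (\<Sum>\<tau>'\<in>{1..\<tau>}. alphaw H \<tau> \<tau>' *
      (\<Sum>a\<in>joint A. (\<Prod>k\<in>UNIV. pol \<tau>' n k s (a k)) * Q \<tau>' n i s a))"
    using assms(1) step by (intro sum.cong refl arg_cong2[where f = "(*)"])
      (simp add: Q_eq_reward_plus_weighted_fullQ)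
  also have "\<dots> = (\<Sum>m\<in>{1..\<tau>}. alphaw H \<tau> m * fullQ A pol Q m n i s)"
    unfolding fullQ_def by (simp add: mult.commute)
  finally show ?case .
qed

lemma Q_eq_reward_plus_next_V:
  assumes "1 \<le> t" "t \<le> T" "1 \<le> h" "h \<le> H" "a \<in> joint A"
  shows "Q t h i s a = r h i s a + (\<Sum>s'\<in>UNIV. pmf (P h s a) s' * V i (Suc h) t s')"
  using assms by (simp add: Q_eq_reward_plus_weighted_fullQ V_eq_weighted_fullQ)

lemma Vmod_bounds:
  assumes dev: "\<And>h s a. a \<in> joint A \<Longrightarrow> dev h s a \<in> joint A"
    and "1 \<le> h" "h \<le> Suc H" "\<tau> \<le> T"
  shows "0 \<le> Vmod dev i h \<tau> s \<and> Vmod dev i h \<tau> s \<le> real (Suc H - h)"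
  using assms(3,4)
proof (induction h arbitrary: \<tau> s rule: inc_induct)
  case base
  then show ?case by simp
next
  case (step n)
  define U where "U \<tau>' a = r n i s (dev n s a)
      + (\<Sum>s'\<in>UNIV. pmf (P n s (dev n s a)) s' * Vmod dev i (Suc n) \<tau>' s')" for \<tau>' a
  define W where "W \<tau>' = (\<Sum>a\<in>joint A. (\<Prod>k\<in>UNIV. pol \<tau>' n k s (a k)) * U \<tau>' a)" for \<tau>'
  have U_bounds: "0 \<le> U \<tau>' a \<and> U \<tau>' a \<le> real (Suc H - n)" if "\<tau>' \<in> {1..\<tau>}" "a \<in> joint A" for \<tau>' a
  proof -
    have "0 \<le> (\<Sum>s'\<in>UNIV. pmf (P n s (dev n s a)) s' * Vmod dev i (Suc n) \<tau>' s')
        \<and> (\<Sum>s'\<in>UNIV. pmf (P n s (dev n s a)) s' * Vmod dev i (Suc n) \<tau>' s') \<le> real (Suc H - Suc n)"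
      by (rule weighted_sum_bounds) (use step.IH step.prems that in \<open>auto simp: sum_pmf_eq_1\<close>)
    moreover have "0 \<le> r n i s (dev n s a) \<and> r n i s (dev n s a) \<le> 1"
      using r_range dev that(2) by blast
    ultimately show ?thesis
      using step.hyps unfolding U_def by auto
  qed
  have W_bounds: "0 \<le> W \<tau>' \<and> W \<tau>' \<le> real (Suc H - n)" if "\<tau>' \<in> {1..\<tau>}" for \<tau>'
    unfolding W_def
    using isdist_joint_pol[of \<tau>' n] step that U_bounds[OF that] assms(2)
    by (intro weighted_sum_bounds) (auto simp: isdist_def)
  have "Vmod dev i n \<tau> s = (\<Sum>\<tau>'\<in>{1..\<tau>}. alphaw H \<tau> \<tau>' * W \<tau>')"
    unfolding W_def U_def using step.hyps by (simp add: Vbar_unfold)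
  moreover have "0 \<le> (\<Sum>\<tau>'\<in>{1..\<tau>}. alphaw H \<tau> \<tau>' * W \<tau>') \<and> (\<Sum>\<tau>'\<in>{1..\<tau>}. alphaw H \<tau> \<tau>' * W \<tau>') \<le> real (Suc H - n)"
  proof (cases "\<tau> = 0")
    case False
    then show ?thesis
      using W_bounds sum_alphaw[of \<tau> H] by (intro weighted_sum_bounds) (auto intro: alphaw_nonneg)
  qed simp
  ultimately show ?case by simp
qed

lemma deviation_le_delta:
  fixes phi :: "nat \<Rightarrow> 's \<Rightarrow> 'a \<Rightarrow> 'a"
  assumes phi: "\<forall>h s b. b \<in> A i \<longrightarrow> phi h s b \<in> A i" and "1 \<le> h" "h \<le> Suc H" "\<tau> \<le> T"
  shows "Vmod (modif i phi) i h \<tau> s - V i h \<tau> s \<le> delta A r P H pol h \<tau>"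
  unfolding delta_eq_Sup_gains
proof (rule cSup_upper)
  show "Vmod (modif i phi) i h \<tau> s - V i h \<tau> s \<in> gains h \<tau>"
    using phi by blast
  show "bdd_above (gains h \<tau>)"
  proof (rule bdd_aboveI[where M = "real H"], clarify)
    fix i and phi :: "nat \<Rightarrow> 's \<Rightarrow> 'a \<Rightarrow> 'a" and s
    assume "\<forall>h' s' b. b \<in> A i \<longrightarrow> phi h' s' b \<in> A i"
    then have "\<And>h s a. a \<in> joint A \<Longrightarrow> modif i phi h s a \<in> joint A"
      by (simp add: modif_in_joint)
    then have "Vmod (modif i phi) i h \<tau> s \<le> real (Suc H - h)"
      using Vmod_bounds[OF _ assms(2-4)] by blast
    moreover have "0 \<le> V i h \<tau> s"
      using Vmod_bounds[of "\<lambda>h s a. a" h \<tau> i s] assms(2-4) by blast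
    ultimately show "Vmod (modif i phi) i h \<tau> s - V i h \<tau> s \<le> real H"
      using assms(2) by linarith
  qed
qed

lemma deviation_gain_le:
  fixes phi :: "nat \<Rightarrow> 's \<Rightarrow> 'a \<Rightarrow> 'a"
  assumes phi: "\<forall>h s b. b \<in> A i \<longrightarrow> phi h s b \<in> A i"
    and h: "1 \<le> h" "h \<le> H" and t: "1 \<le> t" "t \<le> T"
  shows "Vmod (modif i phi) i h t s - V i h t s
    \<le> (\<Sum>j\<in>{1..t}. alphaw H t j * delta A r P H pol (Suc h) j)
      + (\<Sum>j\<in>{1..t}. alphaw H t j *
          (\<Sum>b\<in>A i. pol j h i s b * (margQ A pol Q j h i s (phi h s b) - margQ A pol Q j h i s b)))"
proof -
  let ?D = "modif i phi"
  define E where "E \<tau> a = (\<Prod>k\<in>UNIV. pol \<tau> h k s (a k))" for \<tau> a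
  define \<delta> where "\<delta> \<tau> = delta A r P H pol (Suc h) \<tau>" for \<tau>
  define M where "M \<tau> b = margQ A pol Q \<tau> h i s b" for \<tau> b
  have one_step: "r h i s (?D h s a) + (\<Sum>s'\<in>UNIV. pmf (P h s (?D h s a)) s' * Vmod ?D i (Suc h) \<tau> s')
      \<le> Q \<tau> h i s (?D h s a) + \<delta> \<tau>"
    if \<tau>: "\<tau> \<in> {1..t}" and a: "a \<in> joint A" for \<tau> a
  proof -
    have "(\<Sum>s'\<in>UNIV. pmf (P h s (?D h s a)) s' * Vmod ?D i (Suc h) \<tau> s')
        \<le> (\<Sum>s'\<in>UNIV. pmf (P h s (?D h s a)) s' * V i (Suc h) \<tau> s') + \<delta> \<tau>"
      unfolding \<delta>_def using deviation_le_delta[OF phi] h t \<tau>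
      by (intro weighted_sum_le_add isdist_pmf) (auto simp: algebra_simps)
    then show ?thesis
      using Q_eq_reward_plus_next_V[of \<tau> h "?D h s a" i s] modif_in_joint[OF a phi] \<tau> h t by simp
  qed
  have "Vmod ?D i h t s = (\<Sum>\<tau>\<in>{1..t}. alphaw H t \<tau> * (\<Sum>a\<in>joint A. E \<tau> a *
      (r h i s (?D h s a) + (\<Sum>s'\<in>UNIV. pmf (P h s (?D h s a)) s' * Vmod ?D i (Suc h) \<tau> s'))))"
    unfolding E_def using h by (simp add: Vbar_unfold)
  also have "\<dots> \<le> (\<Sum>\<tau>\<in>{1..t}. alphaw H t \<tau> * ((\<Sum>a\<in>joint A. E \<tau> a * Q \<tau> h i s (?D h s a)) + \<delta> \<tau>))"
  proof (rule sum_mono, rule mult_left_mono)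
    fix \<tau> assume \<tau>: "\<tau> \<in> {1..t}"
    show "(\<Sum>a\<in>joint A. E \<tau> a * (r h i s (?D h s a)
          + (\<Sum>s'\<in>UNIV. pmf (P h s (?D h s a)) s' * Vmod ?D i (Suc h) \<tau> s')))
        \<le> (\<Sum>a\<in>joint A. E \<tau> a * Q \<tau> h i s (?D h s a)) + \<delta> \<tau>"
      unfolding E_def using isdist_joint_pol[of \<tau> h] \<tau> h t one_step[OF \<tau>]
      by (intro weighted_sum_le_add) auto
    show "0 \<le> alphaw H t \<tau>"
      using \<tau> by (simp add: alphaw_nonneg)
  qed
  also have "\<dots> = (\<Sum>\<tau>\<in>{1..t}. alphaw H t \<tau> * (\<Sum>b\<in>A i. pol \<tau> h i s b * M \<tau> (phi h s b)))
      + (\<Sum>\<tau>\<in>{1..t}. alphaw H t \<tau> * \<delta> \<tau>)"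
    unfolding E_def M_def modif_def using phi
    by (simp add: sum_joint_deviation_eq_sum_margQ A_fin distrib_left sum.distrib)
  finally have "Vmod ?D i h t s \<le> \<dots>" .
  moreover have "V i h t s = (\<Sum>\<tau>\<in>{1..t}. alphaw H t \<tau> * (\<Sum>b\<in>A i. pol \<tau> h i s b * M \<tau> b))"
    unfolding M_def using h t by (simp add: V_eq_weighted_fullQ fullQ_eq_sum_margQ A_fin)
  ultimately show ?thesis
    unfolding \<delta>_def M_def
    by (simp add: right_diff_distrib sum_subtractf algebra_simps)
qed

theorem delta_le_weighted_next_delta_plus_swapreg:
  assumes "1 \<le> h" "h \<le> H" "1 \<le> t" "t \<le> T"
  shows "delta A r P H pol h t
    \<le> (\<Sum>j\<in>{1..t}. alphaw H t j * delta A r P H pol (Suc h) j) + swapreg A H pol Q h t"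
  unfolding delta_eq_Sup_gains[of h t]
proof (rule cSup_least)
  fix i s
  have "Vmod (modif i (\<lambda>_ _ b. b)) i h t s - V i h t s \<in> gains h t"
    by blast
  then show "gains h t \<noteq> {}"
    by blast
next
  fix x assume "x \<in> gains h t"
  then obtain i phi s where x: "x = Vmod (modif i phi) i h t s - V i h t s"
    and phi: "\<forall>h' s' b. b \<in> A i \<longrightarrow> phi h' s' b \<in> A i"
    by blast
  have "(\<Sum>j\<in>{1..t}. alphaw H t j *
      (\<Sum>b\<in>A i. pol j h i s b * (margQ A pol Q j h i s (phi h s b) - margQ A pol Q j h i s b)))
    \<le> swapreg A H pol Q h t"
    by (rule swap_gain_le_swapreg) (use A_fin phi in auto)
  then show "x \<le> (\<Sum>j\<in>{1..t}. alphaw H t j * delta A r P H pol (Suc h) j) + swapreg A H pol Q h t"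
    using deviation_gain_le[OF phi assms, of s] unfolding x by linarith
qed

end

theorem lemma1:
  fixes A :: "'i::finite \<Rightarrow> 'a set"
    and r :: "nat \<Rightarrow> 'i \<Rightarrow> 's::finite \<Rightarrow> ('i \<Rightarrow> 'a) \<Rightarrow> real"
    and P :: "nat \<Rightarrow> 's \<Rightarrow> ('i \<Rightarrow> 'a) \<Rightarrow> 's pmf"
    and H T :: nat and eta :: real
    and pol :: "nat \<Rightarrow> nat \<Rightarrow> 'i \<Rightarrow> 's \<Rightarrow> 'a \<Rightarrow> real"
    and Q :: "nat \<Rightarrow> nat \<Rightarrow> 'i \<Rightarrow> 's \<Rightarrow> ('i \<Rightarrow> 'a) \<Rightarrow> real"
    and q :: "nat \<Rightarrow> nat \<Rightarrow> 'i \<Rightarrow> 's \<Rightarrow> 'a \<Rightarrow> 'a \<Rightarrow> real"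
  assumes A_fin: "\<And>i. finite (A i)" and A_ne: "\<And>i. A i \<noteq> {}"
    and r_range: "\<And>h i s a. a \<in> joint A \<Longrightarrow> 0 \<le> r h i s a \<and> r h i s a \<le> 1"
    and eta_pos: "eta > 0"
    and Q0: "\<And>h i s a. a \<in> joint A \<Longrightarrow> Q 0 h i s a = 0"
    and pol0: "\<And>h i s b. pol 0 h i s b = (if b \<in> A i then 1 / real (card (A i)) else 0)"
    and QH1: "\<And>t i s a. a \<in> joint A \<Longrightarrow> Q t (Suc H) i s a = 0"
    and q_argmax: "\<And>t h i s b. \<lbrakk>1 \<le> t; t \<le> T; 1 \<le> h; h \<le> H; b \<in> A i\<rbrakk> \<Longrightarrow>
        posdist (A i) (q t h i s b) \<and>
        (\<forall>x. posdist (A i) x \<longrightarrow>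
           ftrl_obj (A i) eta (wgt H t t) (loss A H pol Q t h i s b) x
           \<le> ftrl_obj (A i) eta (wgt H t t) (loss A H pol Q t h i s b) (q t h i s b))"
    and pol_fix: "\<And>t h i s. \<lbrakk>1 \<le> t; t \<le> T; 1 \<le> h; h \<le> H\<rbrakk> \<Longrightarrow>
        isdist (A i) (pol t h i s) \<and>
        (\<forall>b'\<in>A i. pol t h i s b' = (\<Sum>b\<in>A i. pol t h i s b * q t h i s b b'))"
    and Q_upd: "\<And>t h i s a. \<lbrakk>1 \<le> t; t \<le> T; 1 \<le> h; h \<le> H; a \<in> joint A\<rbrakk> \<Longrightarrow>
        Q t h i s a = (1 - alpha H t) * Q (t - 1) h i s a
          + alpha H t * (r h i s a + (\<Sum>s'\<in>UNIV. pmf (P h s a) s' * fullQ A pol Q t (Suc h) i s'))"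
    and h_rng: "1 \<le> h" "h \<le> H" and t_rng: "1 \<le> t" "t \<le> T"
  shows "delta A r P H pol h t
           \<le> (\<Sum>j\<in>{1..t}. alphaw H t j * delta A r P H pol (Suc h) j) + swapreg A H pol Q h t"
proof -
  interpret smooth_Q_updates A r P H T pol Q
    using A_fin r_range pol_fix QH1 Q_upd by unfold_locales blast+
  show ?thesis
    using delta_le_weighted_next_delta_plus_swapreg h_rng t_rng by blast
qed

end
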